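(* Let $\mathcal{R}$ be a right amenable cell space with finite stabiliser $G_0$, let $Q$ be a finite nonempty set, and let $\mathcal{F}=(F_i)_{i\in I}$ be a right Følner net in $\mathcal{R}$. Let $X\subseteq Q^M$ and let $E$ be a finite subset of $G/G_0$ with $G_0\in E$. Then $\mathrm{h}_{(F_i^{+E})_{i\in I}}(X)\leq\mathrm{h}_{\mathcal{F}}(X)$.
   Context: A cell space $\mathcal{R}$ consists of a group $G$ acting transitively on the left on a nonempty set $M$ via $\triangleright$, a point $m_0\in M$ and a family $(g_{m_0,m})_{m\in M}$ in $G$ with $g_{m_0,m}\triangleright m_0=m$. $G_0$ is the stabiliser of $m_0$ and $G/G_0$ the set of left cosets. The right semi-action $\triangleleft\colon M\times G/G_0\to M$ is $m\triangleleft gG_0=g_{m_0,m}g\triangleright m_0$; $m\triangleleft E=\{m\triangleleft e:e\in E\}$. For $A\subseteq M$, $A^{+E}=\{m\in M:(m\triangleleft E)\cap A\neq\emptyset\}$. $\mathcal{R}$ is right amenable if there is a finitely additive probability measure $\mu$ on the power set of $M$ such that $\mu(\{a\triangleleft\mathfrak{g}:a\in A\})=\mu(A)$ whenever $\mathfrak{g}\in G/G_0$, $A\subseteq M$ and $m\mapsto m\triangleleft\mathfrak{g}$ is injective on $A$. A right Følner net in $\mathcal{R}$ is a net $(F_i)_{i\in I}$ (over a directed set) of nonempty finite subsets of $M$ with $\lim_{i}\frac{|F_i\setminus\{m: m\triangleleft\mathfrak{g}\in F_i\}|}{|F_i|}=0$ for every $\mathfrak{g}\in G/G_0$. For $A\subseteq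 M$, $\pi_A\colon Q^M\to Q^A$ is restriction; for a net $\mathcal{F}'=(F'_i)_{i\in I}$ of nonempty finite subsets of $M$, $\mathrm{h}_{\mathcal{F}'}(X)=\limsup_{i\in I}\frac{\log|\pi_{F'_i}(X)|}{|F'_i|}$. *)

theory Defs
  imports Complex_Main "HOL-Algebra.Coset" "HOL-Library.Extended_Real" "HOL-Library.Liminf_Limsup"
begin

text \<open>A cell space: group G acting (on the left) on the set M via act, a base point m0
  and a family gm with gm m in G and act (gm m) m0 = m (this makes the action transitive).\<close>
definition cell_space ::
  "('g, 'b) monoid_scheme \<Rightarrow> ('g \<Rightarrow> 'm \<Rightarrow> 'm) \<Rightarrow> 'm set \<Rightarrow> 'm \<Rightarrow> ('m \<Rightarrow> 'g) \<Rightarrow> bool" where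
  "cell_space G act M m0 gm \<longleftrightarrow> group G \<and> m0 \<in> M \<and>
     (\<forall>g\<in>carrier G. \<forall>m\<in>M. act g m \<in> M) \<and>
     (\<forall>m\<in>M. act \<one>\<^bsub>G\<^esub> m = m) \<and>
     (\<forall>g\<in>carrier G. \<forall>h\<in>carrier G. \<forall>m\<in>M. act (g \<otimes>\<^bsub>G\<^esub> h) m = act g (act h m)) \<and>
     (\<forall>m\<in>M. gm m \<in> carrier G \<and> act (gm m) m0 = m)"

definition stab :: "('g, 'b) monoid_scheme \<Rightarrow> ('g \<Rightarrow> 'm \<Rightarrow> 'm) \<Rightarrow> 'm \<Rightarrow> 'g set" where
  "stab G act m0 = {g \<in> carrier G. act g m0 = m0}"

definition left_cosets :: "('g, 'b) monoid_scheme \<Rightarrow> 'g set \<Rightarrow> 'g set set" where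
  "left_cosets G H = (\<lambda>g. g <#\<^bsub>G\<^esub> H) ` carrier G"

text \<open>Right semi-action m \<triangleleft> gG0 = g_{m0,m} g \<triangleright> m0 (g any representative of the coset).\<close>
definition rsemi ::
  "('g, 'b) monoid_scheme \<Rightarrow> ('g \<Rightarrow> 'm \<Rightarrow> 'm) \<Rightarrow> 'm \<Rightarrow> ('m \<Rightarrow> 'g) \<Rightarrow> 'm \<Rightarrow> 'g set \<Rightarrow> 'm" where
  "rsemi G act m0 gm m C = act (gm m \<otimes>\<^bsub>G\<^esub> (SOME g. g \<in> C)) m0"

definition plus_set ::
  "('g, 'b) monoid_scheme \<Rightarrow> ('g \<Rightarrow> 'm \<Rightarrow> 'm) \<Rightarrow> 'm set \<Rightarrow> 'm \<Rightarrow> ('m \<Rightarrow> 'g) \<Rightarrow> 'm set \<Rightarrow> 'g set set \<Rightarrow> 'm set" where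
  "plus_set G act M m0 gm A E = {m \<in> M. (rsemi G act m0 gm m ` E) \<inter> A \<noteq> {}}"

definition right_amenable ::
  "('g, 'b) monoid_scheme \<Rightarrow> ('g \<Rightarrow> 'm \<Rightarrow> 'm) \<Rightarrow> 'm set \<Rightarrow> 'm \<Rightarrow> ('m \<Rightarrow> 'g) \<Rightarrow> bool" where
  "right_amenable G act M m0 gm \<longleftrightarrow> (\<exists>\<mu> :: 'm set \<Rightarrow> real.
     (\<forall>A. A \<subseteq> M \<longrightarrow> \<mu> A \<ge> 0) \<and> \<mu> M = 1 \<and>
     (\<forall>A B. A \<subseteq> M \<longrightarrow> B \<subseteq> M \<longrightarrow> A \<inter> B = {} \<longrightarrow> \<mu> (A \<union> B) = \<mu> A + \<mu> B) \<and>
     (\<forall>C \<in> left_cosets G (stab G act m0). \<forall>A. A \<subseteq> M \<longrightarrow>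
        inj_on (\<lambda>m. rsemi G act m0 gm m C) A \<longrightarrow>
        \<mu> ((\<lambda>a. rsemi G act m0 gm a C) ` A) = \<mu> A))"

definition directed_set :: "'i set \<Rightarrow> ('i \<Rightarrow> 'i \<Rightarrow> bool) \<Rightarrow> bool" where
  "directed_set I rel \<longleftrightarrow> I \<noteq> {} \<and> (\<forall>i\<in>I. rel i i) \<and>
     (\<forall>i\<in>I. \<forall>j\<in>I. \<forall>k\<in>I. rel i j \<longrightarrow> rel j k \<longrightarrow> rel i k) \<and>
     (\<forall>i\<in>I. \<forall>j\<in>I. \<exists>k\<in>I. rel i k \<and> rel j k)"

definition net_filter :: "'i set \<Rightarrow> ('i \<Rightarrow> 'i \<Rightarrow> bool) \<Rightarrow> 'i filter" where
  "net_filter I rel = (INF i\<in>I. principal {j \<in> I. rel i j})"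

definition right_folner_net ::
  "('g, 'b) monoid_scheme \<Rightarrow> ('g \<Rightarrow> 'm \<Rightarrow> 'm) \<Rightarrow> 'm set \<Rightarrow> 'm \<Rightarrow> ('m \<Rightarrow> 'g) \<Rightarrow>
   'i set \<Rightarrow> ('i \<Rightarrow> 'i \<Rightarrow> bool) \<Rightarrow> ('i \<Rightarrow> 'm set) \<Rightarrow> bool" where
  "right_folner_net G act M m0 gm I rel F \<longleftrightarrow> directed_set I rel \<and>
     (\<forall>i\<in>I. F i \<subseteq> M \<and> finite (F i) \<and> F i \<noteq> {}) \<and>
     (\<forall>C \<in> left_cosets G (stab G act m0).
        ((\<lambda>i. real (card (F i - {m \<in> M. rsemi G act m0 gm m C \<in> F i})) / real (card (F i)))
          \<longlongrightarrow> 0) (net_filter I rel))"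

definition proj :: "'m set \<Rightarrow> ('m \<Rightarrow> 'q) set \<Rightarrow> ('m \<Rightarrow> 'q) set" where
  "proj A X = (\<lambda>c. restrict c A) ` X"

definition net_entropy ::
  "'i set \<Rightarrow> ('i \<Rightarrow> 'i \<Rightarrow> bool) \<Rightarrow> ('i \<Rightarrow> 'm set) \<Rightarrow> ('m \<Rightarrow> 'q) set \<Rightarrow> ereal" where
  "net_entropy I rel F X =
     Limsup (net_filter I rel) (\<lambda>i. ereal (ln (real (card (proj (F i) X))) / real (card (F i))))"

end

theory Submission
  imports Defs
begin

text \<open>If \<open>m \<in> F\<^sup>+\<^sup>E - F\<close> then \<open>m \<triangleleft> e \<in> F\<close> for some \<open>e \<in> E\<close>, and \<open>m\<close> is recovered from
  \<open>m \<triangleleft> e\<close> by the semi-action of one of the finitely many cosets \<open>h g\<^sub>e\<^sup>-\<^sup>1 G\<^sub>0\<close> (\<open>h \<in> G\<^sub>0\<close>).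
  Hence \<open>|F\<^sup>+\<^sup>E - F|\<close> is bounded by a finite sum of Folner defects \<open>|F - {m. m \<triangleleft> c \<in> F}|\<close>, so
  \<open>|F\<^sub>i\<^sup>+\<^sup>E - F\<^sub>i| / |F\<^sub>i| \<rightarrow> 0\<close>. Since a pattern on \<open>F\<^sup>+\<^sup>E\<close> is a pattern on \<open>F\<close> together with
  a choice of states on \<open>F\<^sup>+\<^sup>E - F\<close>, the quotient for \<open>F\<^sub>i\<^sup>+\<^sup>E\<close> exceeds the one for \<open>F\<^sub>i\<close>
  by at most \<open>|F\<^sub>i\<^sup>+\<^sup>E - F\<^sub>i| / |F\<^sub>i| \<cdot> log |Q|\<close>.\<close>

lemma card_proj_le:
  assumes "A \<subseteq> B" and "finite B" and "X \<subseteq> B' \<rightarrow>\<^sub>E Q" and "B \<subseteq> B'" and "finite Q"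
  shows "card (proj B X) \<le> card (proj A X) * card Q ^ card (B - A)"
proof -
  let ?split = "\<lambda>y. (restrict y A, restrict y (B - A))"
  have "finite A" using assms(1,2) finite_subset by blast
  have proj_A: "proj A X \<subseteq> A \<rightarrow>\<^sub>E Q"
    unfolding proj_def using assms(1,3,4) by (auto simp: PiE_iff; blast)
  have "inj_on ?split (proj B X)"
  proof (rule inj_onI)
    fix y z assume "y \<in> proj B X" "z \<in> proj B X" and eq: "?split y = ?split z"
    show "y = z"
    proof
      fix x
      show "y x = z x"
      proof (cases "x \<in> B")
        case True
        with eq show ?thesis by (cases "x \<in> A") (auto simp: fun_eq_iff split: if_splits)
      next
        case False
        with \<open>y \<in> proj B X\<close> \<open>z \<in> proj B X\<close> show ?thesis unfolding proj_def by auto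
      qed
    qed
  qed
  moreover have "?split ` proj B X \<subseteq> proj A X \<times> ((B - A) \<rightarrow>\<^sub>E Q)"
  proof
    fix w assume "w \<in> ?split ` proj B X"
    then obtain c where c: "c \<in> X" "w = ?split (restrict c B)" unfolding proj_def by auto
    have "restrict (restrict c B) A = restrict c A" using assms(1) by (auto simp: fun_eq_iff)
    moreover have "restrict (restrict c B) (B - A) \<in> (B - A) \<rightarrow>\<^sub>E Q"
      using c(1) assms(3,4) by (auto simp: PiE_iff; blast)
    ultimately show "w \<in> proj A X \<times> ((B - A) \<rightarrow>\<^sub>E Q)" using c unfolding proj_def by auto
  qed
  moreover have "finite (proj A X \<times> ((B - A) \<rightarrow>\<^sub>E Q))"
    using finite_subset[OF proj_A] \<open>finite A\<close> assms(2,5) by (simp add: finite_PiE)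
  ultimately have "card (proj B X) \<le> card (proj A X \<times> ((B - A) \<rightarrow>\<^sub>E Q))"
    by (simp flip: card_image[of ?split] add: card_mono)
  also have "\<dots> = card (proj A X) * card Q ^ card (B - A)"
    using assms(2) by (simp add: card_cartesian_product card_PiE)
  finally show ?thesis .
qed

lemma ln_div_card_le:
  fixes P p q n d :: nat
  assumes "P \<le> p * q ^ d" and "q \<ge> 1" and "n > 0"
  shows "ln (real P) / real (n + d) \<le> ln (real p) / real n + real d / real n * ln (real q)"
proof (cases "P = 0")
  case True
  have "ln (real p) \<ge> 0" by (cases "p = 0") auto
  with True assms(2,3) show ?thesis by simp
next
  case False
  with assms(1) have "p \<ge> 1" by (cases "p = 0") auto
  have "real P \<le> real p * real q ^ d"
    using assms(1) by (metis of_nat_le_iff of_nat_mult of_nat_power)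
  then have "ln (real P) \<le> ln (real p * real q ^ d)"
    using False by simp
  also have "\<dots> = ln (real p) + real d * ln (real q)"
    using \<open>p \<ge> 1\<close> assms(2) by (simp add: ln_mult ln_realpow)
  finally have "ln (real P) / real (n + d) \<le> (ln (real p) + real d * ln (real q)) / real (n + d)"
    by (simp add: divide_right_mono)
  also have "\<dots> \<le> (ln (real p) + real d * ln (real q)) / real n"
    using \<open>p \<ge> 1\<close> assms(2,3) by (intro divide_left_mono) auto
  finally show ?thesis by (simp add: add_divide_distrib)
qed

lemma Limsup_le_Limsup_plus_vanishing:
  fixes a b \<delta> :: "'i \<Rightarrow> real"
  assumes "eventually (\<lambda>i. a i \<le> b i + \<delta> i) F" and "(\<delta> \<longlongrightarrow> 0) F"
  shows "Limsup F (\<lambda>i. ereal (a i)) \<le> Limsup F (\<lambda>i. ereal (b i))"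
proof (cases "F = bot")
  case False
  show ?thesis
  proof (rule ereal_le_epsilon2)
    fix e :: real assume "0 < e"
    with assms have "eventually (\<lambda>i. ereal (a i) \<le> ereal (b i) + ereal e) F"
      by (auto elim: eventually_mono[OF eventually_conj] dest: order_tendstoD(2))
    then have "Limsup F (\<lambda>i. ereal (a i)) \<le> Limsup F (\<lambda>i. ereal (b i) + ereal e)"
      by (rule Limsup_mono)
    also have "\<dots> = Limsup F (\<lambda>i. ereal (b i)) + ereal e"
      using False by (rule Limsup_add_ereal_right) simp
    finally show "Limsup F (\<lambda>i. ereal (a i)) \<le> Limsup F (\<lambda>i. ereal (b i)) + ereal e" .
  qed
qed simp

lemma eventually_in_net_filter:
  assumes "directed_set I rel"
  shows "eventually (\<lambda>i. i \<in> I) (net_filter I rel)"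
proof -
  obtain i0 where "i0 \<in> I" using assms unfolding directed_set_def by auto
  then show ?thesis
    unfolding net_filter_def by (intro eventually_INF1[of i0]) (auto simp: eventually_principal)
qed

definition inverse_cosets :: "('g, 'b) monoid_scheme \<Rightarrow> 'g set \<Rightarrow> 'g set set \<Rightarrow> 'g set set" where
  "inverse_cosets G H E =
     (\<lambda>(e, h). (h \<otimes>\<^bsub>G\<^esub> inv\<^bsub>G\<^esub> (SOME g. g \<in> e)) <#\<^bsub>G\<^esub> H) ` (E \<times> H)"

lemma finite_inverse_cosets: "finite E \<Longrightarrow> finite H \<Longrightarrow> finite (inverse_cosets G H E)"
  unfolding inverse_cosets_def by simp

locale cell_space_setting =
  fixes G :: "('g, 'b) monoid_scheme" (structure)
    and act :: "'g \<Rightarrow> 'm \<Rightarrow> 'm" and M :: "'m set" and m0 :: 'm and gm :: "'m \<Rightarrow> 'g"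
  assumes cell_space: "cell_space G act M m0 gm"
begin

sublocale group G
  using cell_space unfolding cell_space_def by blast

abbreviation G0 :: "'g set" where "G0 \<equiv> stab G act m0"

abbreviation semi_act :: "'m \<Rightarrow> 'g set \<Rightarrow> 'm" (infixl "\<triangleleft>" 70) where
  "m \<triangleleft> C \<equiv> rsemi G act m0 gm m C"

lemma m0_in_M: "m0 \<in> M"
  and act_closed: "g \<in> carrier G \<Longrightarrow> m \<in> M \<Longrightarrow> act g m \<in> M"
  and act_one: "m \<in> M \<Longrightarrow> act \<one> m = m"
  and act_mult: "g \<in> carrier G \<Longrightarrow> h \<in> carrier G \<Longrightarrow> m \<in> M \<Longrightarrow> act (g \<otimes> h) m = act g (act h m)"
  and gm_closed: "m \<in> M \<Longrightarrow> gm m \<in> carrier G"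
  and act_gm: "m \<in> M \<Longrightarrow> act (gm m) m0 = m"
  using cell_space unfolding cell_space_def by auto

lemma stab_subset: "G0 \<subseteq> carrier G"
  unfolding stab_def by auto

lemma one_in_stab: "\<one> \<in> G0"
  unfolding stab_def using act_one m0_in_M by auto

lemma some_in_left_coset:
  assumes "C \<in> left_cosets G G0"
  shows "(SOME g. g \<in> C) \<in> C" and "(SOME g. g \<in> C) \<in> carrier G"
proof -
  obtain k where k: "k \<in> carrier G" "C = k <# G0"
    using assms unfolding left_cosets_def by auto
  then have "k \<otimes> \<one> \<in> C" using one_in_stab unfolding l_coset_def by blast
  then show "(SOME g. g \<in> C) \<in> C" by (rule someI)
  moreover have "C \<subseteq> carrier G" using k l_coset_subset_G stab_subset by auto
  ultimately show "(SOME g. g \<in> C) \<in> carrier G" by auto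
qed

lemma rsemi_l_coset:
  assumes "m \<in> M" and "k \<in> carrier G"
  shows "m \<triangleleft> (k <# G0) = act (gm m \<otimes> k) m0"
proof -
  have "k <# G0 \<in> left_cosets G G0" using assms(2) unfolding left_cosets_def by auto
  from some_in_left_coset[OF this] obtain t
    where t: "t \<in> G0" "(SOME g. g \<in> k <# G0) = k \<otimes> t"
    unfolding l_coset_def by auto
  then have "t \<in> carrier G" "act t m0 = m0" unfolding stab_def by auto
  have "m \<triangleleft> (k <# G0) = act ((gm m \<otimes> k) \<otimes> t) m0"
    unfolding rsemi_def t(2) using assms \<open>t \<in> carrier G\<close> gm_closed by (simp add: m_assoc)
  also have "\<dots> = act (gm m \<otimes> k) m0"
    using assms \<open>t \<in> carrier G\<close> \<open>act t m0 = m0\<close> gm_closed m0_in_M by (simp add: act_mult)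
  finally show ?thesis .
qed

lemma rsemi_stab: "m \<in> M \<Longrightarrow> m \<triangleleft> G0 = m"
  using rsemi_l_coset[of m \<one>] stab_subset gm_closed act_gm by (simp add: lcos_mult_one)

lemma rsemi_closed: "m \<in> M \<Longrightarrow> C \<in> left_cosets G G0 \<Longrightarrow> m \<triangleleft> C \<in> M"
  unfolding rsemi_def using some_in_left_coset act_closed gm_closed m0_in_M by simp

lemma inverse_cosets_subset: "inverse_cosets G G0 E \<subseteq> left_cosets G G0"
  if "E \<subseteq> left_cosets G G0"
proof
  fix C assume "C \<in> inverse_cosets G G0 E"
  then obtain e h where "e \<in> E" "h \<in> G0" and C: "C = (h \<otimes> inv (SOME g. g \<in> e)) <# G0"
    unfolding inverse_cosets_def by auto
  then have "h \<otimes> inv (SOME g. g \<in> e) \<in> carrier G"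
    using that some_in_left_coset(2) stab_subset by blast
  then show "C \<in> left_cosets G G0" unfolding C left_cosets_def by blast
qed

text \<open>With \<open>m' = m \<triangleleft> g G\<^sub>0\<close> and \<open>h = g\<^sub>m\<^sub>'\<^sup>-\<^sup>1 g\<^sub>m g \<in> G\<^sub>0\<close> one has
  \<open>g\<^sub>m\<^sub>' h g\<^sup>-\<^sup>1 = g\<^sub>m\<close>, so \<open>h g\<^sup>-\<^sup>1 G\<^sub>0\<close> undoes the semi-action of \<open>g G\<^sub>0\<close>.\<close>
lemma rsemi_inverse_coset:
  assumes "m \<in> M" and "C \<in> left_cosets G G0"
  obtains h where "h \<in> G0" and "m \<triangleleft> C \<triangleleft> ((h \<otimes> inv (SOME g. g \<in> C)) <# G0) = m"
proof
  let ?g = "SOME g. g \<in> C" and ?m' = "m \<triangleleft> C"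
  have g: "?g \<in> carrier G" using some_in_left_coset(2)[OF assms(2)] .
  have m': "?m' \<in> M" using rsemi_closed[OF assms] .
  define h where "h = inv (gm ?m') \<otimes> (gm m \<otimes> ?g)"
  have h: "h \<in> carrier G" unfolding h_def using g assms(1) m' gm_closed by auto
  have "act h m0 = act (inv (gm ?m')) (act (gm m \<otimes> ?g) m0)"
    unfolding h_def using g assms(1) m' gm_closed m0_in_M by (simp add: act_mult)
  also have "act (gm m \<otimes> ?g) m0 = act (gm ?m') m0"
    using act_gm[OF m'] unfolding rsemi_def by simp
  finally show "h \<in> G0"
    using h m' gm_closed m0_in_M unfolding stab_def by (simp flip: act_mult add: act_one)
  have "gm ?m' \<otimes> (h \<otimes> inv ?g) = gm m"
    unfolding h_def using g assms(1) m' gm_closed by (simp add: m_assoc[symmetric]) (simp add: m_assoc)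
  then show "?m' \<triangleleft> ((h \<otimes> inv ?g) <# G0) = m"
    using rsemi_l_coset[OF m'] h g act_gm[OF assms(1)] by simp
qed

lemma subset_plus_set: "F \<subseteq> M \<Longrightarrow> G0 \<in> E \<Longrightarrow> F \<subseteq> plus_set G act M m0 gm F E"
  unfolding plus_set_def using rsemi_stab by force

lemma plus_set_diff_subset:
  assumes "E \<subseteq> left_cosets G G0"
  shows "plus_set G act M m0 gm F E - F \<subseteq>
    (\<Union>C\<in>inverse_cosets G G0 E. (\<lambda>x. x \<triangleleft> C) ` (F - {x \<in> M. x \<triangleleft> C \<in> F}))"
proof
  fix m assume "m \<in> plus_set G act M m0 gm F E - F"
  then obtain e where e: "e \<in> E" "m \<triangleleft> e \<in> F" and m: "m \<in> M" "m \<notin> F"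
    unfolding plus_set_def by auto
  obtain h where "h \<in> G0" and undo: "m \<triangleleft> e \<triangleleft> ((h \<otimes> inv (SOME g. g \<in> e)) <# G0) = m"
    using rsemi_inverse_coset[OF m(1)] e(1) assms by blast
  define C where "C = (h \<otimes> inv (SOME g. g \<in> e)) <# G0"
  have "C \<in> inverse_cosets G G0 E"
    unfolding C_def inverse_cosets_def using e(1) \<open>h \<in> G0\<close> by force
  moreover have "m \<triangleleft> e \<in> M" using rsemi_closed m(1) e(1) assms by blast
  then have "m \<in> (\<lambda>x. x \<triangleleft> C) ` (F - {x \<in> M. x \<triangleleft> C \<in> F})"
    using undo e(2) m(2) unfolding C_def by (intro image_eqI[of m _ "m \<triangleleft> e"]) auto
  ultimately show "m \<in> (\<Union>C\<in>inverse_cosets G G0 E. (\<lambda>x. x \<triangleleft> C) ` (F - {x \<in> M. x \<triangleleft> C \<in> F}))"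
    by blast
qed

lemma
  assumes "E \<subseteq> left_cosets G G0" and "finite E" and "finite G0" and "finite F"
  shows finite_plus_set: "finite (plus_set G act M m0 gm F E)"
    and card_plus_set_diff_le: "card (plus_set G act M m0 gm F E - F) \<le>
      (\<Sum>C\<in>inverse_cosets G G0 E. card (F - {x \<in> M. x \<triangleleft> C \<in> F}))"
proof -
  let ?U = "\<Union>C\<in>inverse_cosets G G0 E. (\<lambda>x. x \<triangleleft> C) ` (F - {x \<in> M. x \<triangleleft> C \<in> F})"
  have fin: "finite (inverse_cosets G G0 E)" using assms(2,3) by (rule finite_inverse_cosets)
  then have "finite ?U" using assms(4) by auto
  have sub: "plus_set G act M m0 gm F E - F \<subseteq> ?U"
    using assms(1) by (rule plus_set_diff_subset)
  then have "plus_set G act M m0 gm F E \<subseteq> F \<union> ?U" by blast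
  with \<open>finite ?U\<close> assms(4) show "finite (plus_set G act M m0 gm F E)"
    by (meson finite_Un finite_subset)
  have "card (plus_set G act M m0 gm F E - F) \<le> card ?U"
    using \<open>finite ?U\<close> sub by (rule card_mono)
  also have "\<dots> \<le> (\<Sum>C\<in>inverse_cosets G G0 E. card ((\<lambda>x. x \<triangleleft> C) ` (F - {x \<in> M. x \<triangleleft> C \<in> F})))"
    using fin by (rule card_UN_le)
  also have "\<dots> \<le> (\<Sum>C\<in>inverse_cosets G G0 E. card (F - {x \<in> M. x \<triangleleft> C \<in> F}))"
    by (intro sum_mono card_image_le) (use assms(4) in auto)
  finally show "card (plus_set G act M m0 gm F E - F) \<le>
      (\<Sum>C\<in>inverse_cosets G G0 E. card (F - {x \<in> M. x \<triangleleft> C \<in> F}))" .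
qed

lemma ln_card_proj_plus_set_le:
  assumes "E \<subseteq> left_cosets G G0" and "finite E" and "finite G0" and "G0 \<in> E"
    and "F \<subseteq> M" and "finite F" and "F \<noteq> {}"
    and "X \<subseteq> M \<rightarrow>\<^sub>E Q" and "finite Q" and "Q \<noteq> {}"
  shows "ln (card (proj (plus_set G act M m0 gm F E) X)) / card (plus_set G act M m0 gm F E)
    \<le> ln (card (proj F X)) / card F
       + (\<Sum>C\<in>inverse_cosets G G0 E. card (F - {x \<in> M. x \<triangleleft> C \<in> F}) / card F) * ln (card Q)"
proof -
  let ?Fp = "plus_set G act M m0 gm F E"
  let ?d = "card (?Fp - F)"
  have "F \<subseteq> ?Fp" using assms(5,4) by (rule subset_plus_set)
  have "finite ?Fp" using assms(1-3,6) by (rule finite_plus_set)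
  have card_Fp: "card ?Fp = card F + ?d"
    using \<open>F \<subseteq> ?Fp\<close> \<open>finite ?Fp\<close> by (metis card_Diff_subset card_mono finite_subset le_add_diff_inverse)
  have "?Fp \<subseteq> M" unfolding plus_set_def by auto
  have "card (proj ?Fp X) \<le> card (proj F X) * card Q ^ ?d"
    using \<open>F \<subseteq> ?Fp\<close> \<open>finite ?Fp\<close> assms(8) \<open>?Fp \<subseteq> M\<close> assms(9) by (rule card_proj_le)
  moreover have "card Q \<ge> 1" and "card F > 0"
    using assms(6,7,9,10) by (auto simp: Suc_le_eq card_gt_0_iff)
  ultimately have "ln (card (proj ?Fp X)) / card ?Fp \<le> ln (card (proj F X)) / card F + ?d / card F * ln (card Q)"
    unfolding card_Fp by (rule ln_div_card_le)
  moreover have "real ?d / card F \<le> (\<Sum>C\<in>inverse_cosets G G0 E. card (F - {x \<in> M. x \<triangleleft> C \<in> F}) / card F)"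
    unfolding sum_divide_distrib[symmetric] using card_plus_set_diff_le[OF assms(1-3,6)]
    by (intro divide_right_mono) (simp_all flip: of_nat_sum)
  then have "real ?d / card F * ln (card Q)
      \<le> (\<Sum>C\<in>inverse_cosets G G0 E. card (F - {x \<in> M. x \<triangleleft> C \<in> F}) / card F) * ln (card Q)"
    using \<open>card Q \<ge> 1\<close> by (intro mult_right_mono) simp_all
  ultimately show ?thesis by linarith
qed

end

theorem lemma11:
  fixes G :: "('g, 'b) monoid_scheme" and act :: "'g \<Rightarrow> 'm \<Rightarrow> 'm"
    and M :: "'m set" and m0 :: 'm and gm :: "'m \<Rightarrow> 'g"
    and Q :: "'q set" and I :: "'i set" and rel :: "'i \<Rightarrow> 'i \<Rightarrow> bool"
    and F :: "'i \<Rightarrow> 'm set" and X :: "('m \<Rightarrow> 'q) set" and E :: "'g set set"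
  assumes "cell_space G act M m0 gm"
    and "right_amenable G act M m0 gm"
    and "finite (stab G act m0)"
    and "finite Q" and "Q \<noteq> {}"
    and "right_folner_net G act M m0 gm I rel F"
    and "X \<subseteq> M \<rightarrow>\<^sub>E Q"
    and "finite E" and "E \<subseteq> left_cosets G (stab G act m0)"
    and "stab G act m0 \<in> E"
  shows "net_entropy I rel (\<lambda>i. plus_set G act M m0 gm (F i) E) X \<le> net_entropy I rel F X"
proof -
  interpret cell_space_setting G act M m0 gm using assms(1) by unfold_locales
  let ?D = "inverse_cosets G G0 E"
  let ?defect = "\<lambda>i. (\<Sum>C\<in>?D. card (F i - {x \<in> M. x \<triangleleft> C \<in> F i}) / card (F i)) * ln (card Q)"
  have directed: "directed_set I rel" and F: "\<And>i. i \<in> I \<Longrightarrow> F i \<subseteq> M \<and> finite (F i) \<and> F i \<noteq> {}"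
    and folner: "\<And>C. C \<in> left_cosets G G0 \<Longrightarrow>
        ((\<lambda>i. card (F i - {x \<in> M. x \<triangleleft> C \<in> F i}) / card (F i)) \<longlongrightarrow> 0) (net_filter I rel)"
    using assms(6) unfolding right_folner_net_def by auto
  have "((\<lambda>i. \<Sum>C\<in>?D. card (F i - {x \<in> M. x \<triangleleft> C \<in> F i}) / card (F i))
      \<longlongrightarrow> (\<Sum>C\<in>?D. 0)) (net_filter I rel)"
    using inverse_cosets_subset[OF assms(9)] by (intro tendsto_sum folner) blast
  then have "((\<lambda>i. \<Sum>C\<in>?D. card (F i - {x \<in> M. x \<triangleleft> C \<in> F i}) / card (F i))
      \<longlongrightarrow> 0) (net_filter I rel)"
    by simp
  then have "(?defect \<longlongrightarrow> 0) (net_filter I rel)"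
    by (rule tendsto_mult_left_zero)
  moreover have "eventually (\<lambda>i.
      ln (card (proj (plus_set G act M m0 gm (F i) E) X)) / card (plus_set G act M m0 gm (F i) E)
      \<le> ln (card (proj (F i) X)) / card (F i) + ?defect i) (net_filter I rel)"
    using eventually_in_net_filter[OF directed]
    by eventually_elim (use F assms(3-5,7-10) in \<open>blast intro: ln_card_proj_plus_set_le\<close>)
  ultimately show ?thesis
    unfolding net_entropy_def by (intro Limsup_le_Limsup_plus_vanishing)
qed

end
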